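(* Let $\mathbf{F}$ be a three-dimensional Euclidean space with inner product $\langle\cdot,\cdot\rangle$, let $Z\in\mathbf{F}$ be a unit vector and $R>0$. Let $B$ be the sphere of radius $R$ centered at the origin, and $\mathbf{E}=\{q\in\mathbf{F}:\langle Z,q\rangle=R\}$ the plane tangent to $B$ at $O=RZ$. For $q\in B$ put $h=\langle Z,q\rangle/R$, $Z_B=Z-\frac{h}{R}q$, and $b(q)=R^{-2}(1-h^2)^{-3/2}$. Consider a particle of unit mass moving on $B$, in the open hemisphere $\{h>0\}$ minus the point $O$, according to the spherical Kepler problem, i.e. $\ddot q=b(q)\,Z_B+\lambda q$ with $\lambda$ the scalar (depending on $q,\dot q$, possibly $t$) that keeps $q$ on $B$. Its energy is $$\mathcal{E}=\tfrac12\|\dot q\|^2+U(q),\qquad U(q)=-\frac{h}{R\sqrt{1-h^2}}.$$ Let $q_{\mathbf{E}}=q/h\in\mathbf{E}$ be the central projection, $Q=q_{\mathbf{E}}-RZ$, and $\tau$ the time defined by $d\tau=h^{-2}\,dt$. Then $Q$ satisfies $\frac{d^2Q}{d\tau^2}=-\|Q\|^{-3}Q$; suppose that its orbit is an ellipse with semi-major axis $a$ and eccentricity $e$. Then $$\mathcal{E}=-\frac{1}{2a}+\frac{a(1-e^2)}{2R^2}.$$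
   Context: Dots denote derivatives with respect to the original time $t$. The Kepler problem in the plane $\mathbf{E}$ (with attracting center $O$ and unit masses) has energy $E=\frac12\|dQ/d\tau\|^2-\frac1{\|Q\|}$; for an elliptic orbit with semi-major axis $a$ and eccentricity $e$ one has $E=-\frac1{2a}$ and squared angular momentum $\|Q\times dQ/d\tau\|^2=a(1-e^2)$. *)

theory Defs
  imports "HOL-Analysis.Analysis"
begin

definition hgt :: "real \<Rightarrow> 'a::real_inner \<Rightarrow> 'a \<Rightarrow> real" where
  "hgt R Z q = (Z \<bullet> q) / R"

definition ZB :: "real \<Rightarrow> 'a::real_inner \<Rightarrow> 'a \<Rightarrow> 'a" where
  "ZB R Z q = Z - (hgt R Z q / R) *\<^sub>R q"

definition bcoef :: "real \<Rightarrow> 'a::real_inner \<Rightarrow> 'a \<Rightarrow> real" where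
  "bcoef R Z q = 1 / (R^2 * (1 - (hgt R Z q)^2) powr (3/2))"

definition Upot :: "real \<Rightarrow> 'a::real_inner \<Rightarrow> 'a \<Rightarrow> real" where
  "Upot R Z q = - hgt R Z q / (R * sqrt (1 - (hgt R Z q)^2))"

definition energy :: "real \<Rightarrow> 'a::real_inner \<Rightarrow> 'a \<Rightarrow> 'a \<Rightarrow> real" where
  "energy R Z q v = 1/2 * (norm v)^2 + Upot R Z q"

definition Qproj :: "real \<Rightarrow> 'a::real_inner \<Rightarrow> 'a \<Rightarrow> 'a" where
  "Qproj R Z q = (1 / hgt R Z q) *\<^sub>R q - R *\<^sub>R Z"

text \<open>S is an ellipse with semi-major axis a and eccentricity e lying in the plane
  orthogonal to Z (the plane E translated to the origin O): the points of that plane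
  whose distances to the two foci c1, c2 (in the plane) sum to 2a, with dist c1 c2 = 2 a e.\<close>
definition is_ellipse :: "'a::real_inner \<Rightarrow> real \<Rightarrow> real \<Rightarrow> 'a set \<Rightarrow> bool" where
  "is_ellipse Z a e S \<longleftrightarrow> 0 < a \<and> 0 \<le> e \<and> e < 1 \<and>
     (\<exists>c1 c2. Z \<bullet> c1 = 0 \<and> Z \<bullet> c2 = 0 \<and> dist c1 c2 = 2 * a * e \<and>
        S = {x. Z \<bullet> x = 0 \<and> dist x c1 + dist x c2 = 2 * a})"

end

theory Submission
  imports Defs
begin

text \<open>In the time \<open>\<tau>\<close>, the central projection \<open>Q\<close> has velocity
  \<open>W = h v - (\<langle>Z, v\<rangle> / R) q\<close>, and the constraint force \<open>\<lambda> q\<close> drops out of its acceleration, which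
  is the Kepler force. A direct computation shows that the spherical energy equals
  \<open>\<parallel>W\<parallel>\<^sup>2/2 - 1/\<parallel>Q\<parallel> + L/(2 R\<^sup>2)\<close>, where \<open>L = \<parallel>Q\<parallel>\<^sup>2 \<parallel>W\<parallel>\<^sup>2 - \<langle>Q, W\<rangle>\<^sup>2\<close> is the squared
  angular momentum of the Kepler motion. By conservation of \<open>L\<close> and of the Laplace-Runge-Lenz
  vector \<open>A\<close>, the Kepler orbit lies on the conic \<open>\<parallel>Q\<parallel> + \<langle>A, Q\<rangle> = L\<close> with a focus at \<open>O\<close>, and
  \<open>\<parallel>A\<parallel>\<^sup>2 = 1 + 2 E L\<close> for the Kepler energy \<open>E\<close>. The orbit sweeps infinitely many directions of
  the given ellipse; writing both conics along rays from \<open>O\<close> gives a quadratic function on the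
  unit circle with infinitely many zeros, hence identically zero, and comparing its even and odd
  parts forces \<open>L = a (1 - e\<^sup>2)\<close> and \<open>\<parallel>A\<parallel> = e\<close>, so \<open>E = -1/(2a)\<close>.\<close>

section \<open>Calculus on an interval\<close>

lemma has_real_derivative_inner:
  fixes f g :: "real \<Rightarrow> 'a::real_inner"
  assumes "(f has_vector_derivative f') (at t)" "(g has_vector_derivative g') (at t)"
  shows "((\<lambda>t. f t \<bullet> g t) has_real_derivative f t \<bullet> g' + f' \<bullet> g t) (at t)"
  using bounded_bilinear.has_vector_derivative[OF bounded_bilinear_inner assms]
  by (simp add: has_real_derivative_iff_has_vector_derivative)

lemma has_real_derivative_norm:
  fixes f :: "real \<Rightarrow> 'a::real_inner"
  assumes "(f has_vector_derivative f') (at t)" "f t \<noteq> 0"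
  shows "((\<lambda>t. norm (f t)) has_real_derivative (f t \<bullet> f') / norm (f t)) (at t)"
proof -
  have "0 < f t \<bullet> f t" using assms(2) by simp
  from DERIV_chain2[OF DERIV_real_sqrt[OF this] has_real_derivative_inner[OF assms(1) assms(1)]]
  show ?thesis
    by (simp add: norm_eq_sqrt_inner inner_commute field_simps)
qed

lemma continuous_on_finite_range_imp_constant:
  fixes f :: "real \<Rightarrow> 'b::metric_space"
  assumes "continuous_on {t0<..<t1} f" "f ` {t0<..<t1} \<subseteq> F" "finite F"
  obtains c where "\<And>t. t \<in> {t0<..<t1} \<Longrightarrow> f t = c"
proof -
  have "connected (f ` {t0<..<t1})" by (rule connected_continuous_image[OF assms(1)]) simp
  moreover have "finite (f ` {t0<..<t1})" using assms(2,3) finite_subset by blast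
  ultimately have "f ` {t0<..<t1} = {} \<or> (\<exists>c. f ` {t0<..<t1} = {c})"
    using connected_finite_iff_sing by blast
  then show ?thesis using assms that by (metis empty_iff image_eqI singletonD)
qed

lemma has_real_derivative_pos_imp_strict_mono_on:
  fixes \<tau> \<alpha> :: "real \<Rightarrow> real"
  assumes deriv: "\<And>t. t \<in> {t0<..<t1} \<Longrightarrow> (\<tau> has_real_derivative \<alpha> t) (at t)"
    and pos: "\<And>t. t \<in> {t0<..<t1} \<Longrightarrow> \<alpha> t > 0"
  shows "strict_mono_on {t0<..<t1} \<tau>"
proof (rule strict_mono_onI)
  fix x y assume xy: "x \<in> {t0<..<t1}" "y \<in> {t0<..<t1}" "x < y"
  show "\<tau> x < \<tau> y"
  proof (rule DERIV_pos_imp_increasing_open[OF xy(3)])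
    show "\<exists>y. (\<tau> has_real_derivative y) (at z) \<and> y > 0" if "x < z" "z < y" for z
      using that xy deriv pos by (meson greaterThanLessThan_iff order.strict_trans)
    show "continuous_on {x..y} \<tau>"
      by (intro continuous_at_imp_continuous_on ballI DERIV_isCont[OF deriv]) (use xy in auto)
  qed
qed

lemma inv_into_has_real_derivative:
  fixes \<tau> \<alpha> :: "real \<Rightarrow> real"
  assumes deriv: "\<And>t. t \<in> {t0<..<t1} \<Longrightarrow> (\<tau> has_real_derivative \<alpha> t) (at t)"
    and pos: "\<And>t. t \<in> {t0<..<t1} \<Longrightarrow> \<alpha> t > 0"
    and t: "t \<in> {t0<..<t1}"
  shows "(inv_into {t0<..<t1} \<tau> has_real_derivative inverse (\<alpha> t)) (at (\<tau> t))"
proof -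
  let ?I = "{t0<..<t1}" and ?g = "inv_into {t0<..<t1} \<tau>"
  have mono: "strict_mono_on ?I \<tau>"
    by (rule has_real_derivative_pos_imp_strict_mono_on[OF deriv pos])
  have inv: "?g (\<tau> x) = x" if "x \<in> ?I" for x
    using inv_into_f_f[OF strict_mono_on_imp_inj_on[OF mono] that] .
  obtain a b where ab: "t0 < a" "a < t" "t < b" "b < t1"
    using t dense by (metis greaterThanLessThan_iff)
  have abI: "z \<in> ?I" if "a \<le> z" "z \<le> b" for z
    using ab that by auto
  have cont: "isCont \<tau> z" if "a \<le> z" "z \<le> b" for z
    using DERIV_isCont[OF deriv[OF abI[OF that]]] .
  have tI: "a \<le> t" "t \<le> b" using ab by auto
  show ?thesis
  proof (rule DERIV_inverse_function[where a = "\<tau> a" and b = "\<tau> b"])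
    show "(\<tau> has_real_derivative \<alpha> t) (at (?g (\<tau> t)))" using deriv[OF t] inv[OF t] by simp
    show "\<alpha> t \<noteq> 0" using pos[OF t] by simp
    show "\<tau> a < \<tau> t" "\<tau> t < \<tau> b"
      by (intro strict_mono_onD[OF mono]; use ab t in auto)+
    show "\<tau> (?g y) = y" if y: "\<tau> a < y" "y < \<tau> b" for y
    proof -
      obtain x where "a \<le> x" "x \<le> b" and x: "\<tau> x = y"
        using IVT[of \<tau> a y b] y cont ab by (meson less_eq_real_def order.trans)
      then have "x \<in> ?I" by (intro abI)
      with inv[OF this] x show ?thesis by simp
    qed
    show "isCont ?g (\<tau> t)"
      by (rule isCont_inverse_function2[of a t b]) (use ab cont inv abI in auto)
  qed
qed

section \<open>Kepler motion with a time change\<close>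

definition runge_lenz :: "'a::real_inner \<Rightarrow> 'a \<Rightarrow> 'a" where
  "runge_lenz Q W = (W \<bullet> W) *\<^sub>R Q - (Q \<bullet> W) *\<^sub>R W - (1 / norm Q) *\<^sub>R Q"

definition angular_momentum_sq :: "'a::real_inner \<Rightarrow> 'a \<Rightarrow> real" where
  "angular_momentum_sq Q W = (Q \<bullet> Q) * (W \<bullet> W) - (Q \<bullet> W)^2"

definition kepler_energy :: "'a::real_inner \<Rightarrow> 'a \<Rightarrow> real" where
  "kepler_energy Q W = 1/2 * (W \<bullet> W) - 1 / norm Q"

lemma angular_momentum_sq_nonneg: "angular_momentum_sq Q W \<ge> 0"
proof -
  have "\<bar>Q \<bullet> W\<bar>^2 \<le> (norm Q * norm W)^2"
    by (rule power_mono[OF Cauchy_Schwarz_ineq2]) simp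
  then show ?thesis
    by (simp add: angular_momentum_sq_def power_mult_distrib power2_norm_eq_inner)
qed

lemma inner_runge_lenz:
  assumes "Q \<noteq> 0"
  shows "runge_lenz Q W \<bullet> Q = angular_momentum_sq Q W - norm Q"
proof -
  have "Q \<bullet> Q = (norm Q)^2" by (simp add: power2_norm_eq_inner)
  with assms show ?thesis
    by (simp add: runge_lenz_def angular_momentum_sq_def inner_diff_left inner_diff_right
        inner_commute power2_eq_square)
qed

lemma runge_lenz_inner_self:
  assumes "Q \<noteq> 0"
  shows "runge_lenz Q W \<bullet> runge_lenz Q W = 1 + 2 * kepler_energy Q W * angular_momentum_sq Q W"
proof -
  have QQ: "Q \<bullet> Q = (norm Q)^2" by (simp add: power2_norm_eq_inner)
  from assms show ?thesis
    by (simp add: runge_lenz_def angular_momentum_sq_def kepler_energy_def inner_diff_left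
        inner_diff_right inner_add_left inner_add_right inner_commute QQ power2_eq_square field_simps)
qed

text \<open>Kepler motion \<open>Q'' = - Q / \<parallel>Q\<parallel>\<^sup>3\<close> in a time \<open>\<tau>\<close>, written in a time \<open>t\<close> with
  \<open>d\<tau>/dt = \<alpha>\<close>; \<open>W\<close> is the velocity with respect to \<open>\<tau>\<close>.\<close>

locale kepler_arc =
  fixes Q W :: "real \<Rightarrow> 'a::real_inner" and \<alpha> :: "real \<Rightarrow> real" and t0 t1 :: real
  assumes interval_nonempty: "t0 < t1"
    and Q_deriv: "t \<in> {t0<..<t1} \<Longrightarrow> (Q has_vector_derivative \<alpha> t *\<^sub>R W t) (at t)"
    and W_deriv: "t \<in> {t0<..<t1} \<Longrightarrow>
                   (W has_vector_derivative (- (\<alpha> t / norm (Q t) ^ 3)) *\<^sub>R Q t) (at t)"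
    and time_factor_pos: "t \<in> {t0<..<t1} \<Longrightarrow> \<alpha> t > 0"
    and Q_nonzero: "t \<in> {t0<..<t1} \<Longrightarrow> Q t \<noteq> 0"
begin

lemma inverse_norm_Q_has_derivative:
  assumes t: "t \<in> {t0<..<t1}"
  shows "((\<lambda>t. 1 / norm (Q t)) has_real_derivative - \<alpha> t * (Q t \<bullet> W t) / norm (Q t) ^ 3) (at t)"
  using DERIV_inverse_fun[OF has_real_derivative_norm[OF Q_deriv[OF t] Q_nonzero[OF t]]] Q_nonzero[OF t]
  by (simp add: inverse_eq_divide power2_eq_square power3_eq_cube mult.assoc)

lemma runge_lenz_has_derivative_zero:
  assumes t: "t \<in> {t0<..<t1}"
  shows "((\<lambda>t. runge_lenz (Q t) (W t)) has_vector_derivative 0) (at t)"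
proof -
  let ?q = "Q t" and ?w = "W t" and ?r = "norm (Q t)" and ?a = "\<alpha> t"
  have "((\<lambda>t. runge_lenz (Q t) (W t)) has_vector_derivative
      (?w \<bullet> ?w) *\<^sub>R (?a *\<^sub>R ?w) + (?w \<bullet> (- (?a / ?r^3)) *\<^sub>R ?q + (- (?a / ?r^3)) *\<^sub>R ?q \<bullet> ?w) *\<^sub>R ?q
      - ((?q \<bullet> ?w) *\<^sub>R (- (?a / ?r^3)) *\<^sub>R ?q + (?q \<bullet> (- (?a / ?r^3)) *\<^sub>R ?q + (?a *\<^sub>R ?w) \<bullet> ?w) *\<^sub>R ?w)
      - ((1 / ?r) *\<^sub>R (?a *\<^sub>R ?w) + (- ?a * (?q \<bullet> ?w) / ?r^3) *\<^sub>R ?q)) (at t)"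
    (is "(_ has_vector_derivative ?D) _")
    unfolding runge_lenz_def
    by (intro has_vector_derivative_diff has_vector_derivative_scaleR Q_deriv[OF t] W_deriv[OF t]
        inverse_norm_Q_has_derivative[OF t] has_real_derivative_inner)
  moreover have "?D = 0"
  proof -
    have "?q \<bullet> ?q = ?r^2" by (simp add: power2_norm_eq_inner)
    with Q_nonzero[OF t] show ?thesis
      by (simp add: inner_commute algebra_simps power3_eq_cube power2_eq_square)
        (simp flip: scaleR_add_left)
  qed
  ultimately show ?thesis by simp
qed

lemma runge_lenz_constant:
  obtains A where "\<And>t. t \<in> {t0<..<t1} \<Longrightarrow> runge_lenz (Q t) (W t) = A"
proof (rule has_vector_derivative_zero_constant
    [where f = "\<lambda>t. runge_lenz (Q t) (W t)" and s = "{t0<..<t1}"])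
  show "((\<lambda>t. runge_lenz (Q t) (W t)) has_vector_derivative 0) (at t within {t0<..<t1})"
    if "t \<in> {t0<..<t1}" for t
    using runge_lenz_has_derivative_zero[OF that] by (rule has_vector_derivative_at_within)
qed (use that in auto)

lemma angular_momentum_sq_has_derivative_zero:
  assumes t: "t \<in> {t0<..<t1}"
  shows "((\<lambda>t. angular_momentum_sq (Q t) (W t)) has_real_derivative 0) (at t)"
proof -
  let ?q = "Q t" and ?w = "W t" and ?Q' = "\<alpha> t *\<^sub>R W t"
    and ?W' = "(- (\<alpha> t / norm (Q t) ^ 3)) *\<^sub>R Q t"
  note dQ = Q_deriv[OF t] and dW = W_deriv[OF t]
  have "((\<lambda>t. angular_momentum_sq (Q t) (W t)) has_real_derivative
      (?q \<bullet> ?Q' + ?Q' \<bullet> ?q) * (?w \<bullet> ?w) + (?q \<bullet> ?q) * (?w \<bullet> ?W' + ?W' \<bullet> ?w)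
      - 2 * (?q \<bullet> ?w) * (?q \<bullet> ?W' + ?Q' \<bullet> ?w)) (at t)"
    unfolding angular_momentum_sq_def
    by (rule derivative_eq_intros has_real_derivative_inner[OF dQ dQ]
        has_real_derivative_inner[OF dW dW] has_real_derivative_inner[OF dQ dW] | simp)+
  moreover have "(?q \<bullet> ?Q' + ?Q' \<bullet> ?q) * (?w \<bullet> ?w) + (?q \<bullet> ?q) * (?w \<bullet> ?W' + ?W' \<bullet> ?w)
      - 2 * (?q \<bullet> ?w) * (?q \<bullet> ?W' + ?Q' \<bullet> ?w) = 0"
    by (simp add: algebra_simps inner_commute)
  ultimately show ?thesis by simp
qed

lemma angular_momentum_sq_constant:
  obtains p where "\<And>t. t \<in> {t0<..<t1} \<Longrightarrow> angular_momentum_sq (Q t) (W t) = p"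
proof -
  have "((\<lambda>t. angular_momentum_sq (Q t) (W t)) has_real_derivative 0) (at t within {t0<..<t1})"
    if "t \<in> {t0<..<t1}" for t
    using angular_momentum_sq_has_derivative_zero[OF that] by (rule has_field_derivative_at_within)
  from has_field_derivative_zero_constant[OF _ this] that show ?thesis by auto
qed

lemma Q_not_constant: "\<not> (\<forall>t\<in>{t0<..<t1}. Q t = c)"
proof
  assume c: "\<forall>t\<in>{t0<..<t1}. Q t = c"
  have W0: "W t = 0" if t: "t \<in> {t0<..<t1}" for t
  proof -
    have "(Q has_vector_derivative 0) (at t)"
      by (rule has_vector_derivative_transform_within_open[where f = "\<lambda>t. c" and S = "{t0<..<t1}"])
        (use t c in auto)
    then have "\<alpha> t *\<^sub>R W t = 0" using vector_derivative_unique_at Q_deriv[OF t] by blast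
    then show ?thesis using time_factor_pos[OF t] by simp
  qed
  obtain t where t: "t \<in> {t0<..<t1}" using interval_nonempty dense by (metis greaterThanLessThan_iff)
  have "(W has_vector_derivative 0) (at t)"
    by (rule has_vector_derivative_transform_within_open[where f = "\<lambda>t. 0" and S = "{t0<..<t1}"])
      (use t W0 in auto)
  then have "(- (\<alpha> t / norm (Q t) ^ 3)) *\<^sub>R Q t = 0"
    using vector_derivative_unique_at W_deriv[OF t] by blast
  then show False using time_factor_pos[OF t] Q_nonzero[OF t] by simp
qed

lemma direction_has_derivative:
  assumes t: "t \<in> {t0<..<t1}"
  shows "((\<lambda>t. (1 / norm (Q t)) *\<^sub>R Q t) has_vector_derivative
           (\<alpha> t / norm (Q t) ^ 3) *\<^sub>R (norm (Q t)^2 *\<^sub>R W t - (Q t \<bullet> W t) *\<^sub>R Q t)) (at t)"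
proof -
  have "((\<lambda>t. (1 / norm (Q t)) *\<^sub>R Q t) has_vector_derivative
      (1 / norm (Q t)) *\<^sub>R (\<alpha> t *\<^sub>R W t) + (- \<alpha> t * (Q t \<bullet> W t) / norm (Q t) ^ 3) *\<^sub>R Q t) (at t)"
    by (rule has_vector_derivative_scaleR[OF inverse_norm_Q_has_derivative[OF t] Q_deriv[OF t]])
  moreover have "(1 / norm (Q t)) *\<^sub>R (\<alpha> t *\<^sub>R W t) + (- \<alpha> t * (Q t \<bullet> W t) / norm (Q t) ^ 3) *\<^sub>R Q t
      = (\<alpha> t / norm (Q t) ^ 3) *\<^sub>R (norm (Q t)^2 *\<^sub>R W t - (Q t \<bullet> W t) *\<^sub>R Q t)"
    using Q_nonzero[OF t] by (simp add: algebra_simps power2_eq_square power3_eq_cube)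
  ultimately show ?thesis by simp
qed

lemma direction_constant_if_angular_momentum_zero:
  assumes L0: "\<And>t. t \<in> {t0<..<t1} \<Longrightarrow> angular_momentum_sq (Q t) (W t) = 0"
  obtains d where "\<And>t. t \<in> {t0<..<t1} \<Longrightarrow> (1 / norm (Q t)) *\<^sub>R Q t = d"
proof -
  have "norm (Q t)^2 *\<^sub>R W t - (Q t \<bullet> W t) *\<^sub>R Q t = 0" if t: "t \<in> {t0<..<t1}" for t
  proof -
    let ?v = "norm (Q t)^2 *\<^sub>R W t - (Q t \<bullet> W t) *\<^sub>R Q t"
    have "Q t \<bullet> Q t = norm (Q t)^2" by (simp add: power2_norm_eq_inner)
    then have "?v \<bullet> ?v = norm (Q t)^2 * angular_momentum_sq (Q t) (W t)"
      unfolding angular_momentum_sq_def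
      by (simp add: inner_diff_left inner_diff_right inner_commute algebra_simps power2_eq_square)
    then show ?thesis using L0[OF t] by simp
  qed
  then have "((\<lambda>t. (1 / norm (Q t)) *\<^sub>R Q t) has_vector_derivative 0) (at t within {t0<..<t1})"
    if "t \<in> {t0<..<t1}" for t
    using direction_has_derivative[OF that] that by (simp add: has_vector_derivative_at_within)
  with has_vector_derivative_zero_constant[OF convex_real_interval(8)] that show ?thesis
    by blast
qed

lemma reparametrized_kepler:
  assumes \<tau>_deriv: "\<And>t. t \<in> {t0<..<t1} \<Longrightarrow> (\<tau> has_real_derivative \<alpha> t) (at t)"
    and s: "s \<in> \<tau> ` {t0<..<t1}"
  defines "\<sigma> \<equiv> inv_into {t0<..<t1} \<tau>"
  shows "((\<lambda>s. Q (\<sigma> s)) has_vector_derivative W (\<sigma> s)) (at s)"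
    and "((\<lambda>s. W (\<sigma> s)) has_vector_derivative (- (1 / norm (Q (\<sigma> s)) ^ 3)) *\<^sub>R Q (\<sigma> s)) (at s)"
proof -
  obtain t where t: "t \<in> {t0<..<t1}" and st: "s = \<tau> t" using s by blast
  have \<sigma>_s: "\<sigma> s = t"
    unfolding \<sigma>_def st using has_real_derivative_pos_imp_strict_mono_on[OF \<tau>_deriv time_factor_pos] t
    by (simp add: strict_mono_on_imp_inj_on)
  have "(\<sigma> has_vector_derivative inverse (\<alpha> t)) (at s)"
    using inv_into_has_real_derivative[OF \<tau>_deriv time_factor_pos t]
    by (simp add: \<sigma>_def st has_real_derivative_iff_has_vector_derivative)
  note chain = vector_diff_chain_at[OF this, unfolded o_def \<sigma>_s]
  have a: "\<alpha> t \<noteq> 0" using time_factor_pos[OF t] by simp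
  show "((\<lambda>s. Q (\<sigma> s)) has_vector_derivative W (\<sigma> s)) (at s)"
    using chain[OF Q_deriv[OF t]] a by (simp add: \<sigma>_s)
  show "((\<lambda>s. W (\<sigma> s)) has_vector_derivative (- (1 / norm (Q (\<sigma> s)) ^ 3)) *\<^sub>R Q (\<sigma> s)) (at s)"
    using chain[OF W_deriv[OF t]] a by (simp add: \<sigma>_s)
qed

end

section \<open>Conics sharing infinitely many directions\<close>

lemma ellipse_focal_form:
  fixes x c1 c2 :: "'a::real_inner"
  assumes "a > 0" "norm (x - c1) + norm (x - c2) = 2 * a"
  shows "norm (x - c2) = (4 * a^2 + c2 \<bullet> c2 - c1 \<bullet> c1) / (4 * a) + ((1 / (2 * a)) *\<^sub>R (c1 - c2)) \<bullet> x"
proof -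
  have sq: "norm (x - c)^2 = x \<bullet> x - 2 * (c \<bullet> x) + c \<bullet> c" for c
    unfolding power2_norm_eq_inner by (simp add: inner_diff_left inner_diff_right inner_commute)
  have c1: "norm (x - c1) = 2 * a - norm (x - c2)" using assms(2) by simp
  have "norm (x - c1)^2 = 4 * a^2 - 4 * a * norm (x - c2) + norm (x - c2)^2"
    unfolding c1 by (simp add: power2_eq_square algebra_simps)
  then have "4 * a * norm (x - c2) = 4 * a^2 + 2 * ((c1 - c2) \<bullet> x) + c2 \<bullet> c2 - c1 \<bullet> c1"
    unfolding sq by (simp add: inner_diff_left algebra_simps)
  moreover have "((1 / (2 * a)) *\<^sub>R (c1 - c2)) \<bullet> x = ((c1 - c2) \<bullet> x) / (2 * a)" by simp
  ultimately show ?thesis using assms(1) by (simp add: field_simps)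
qed

lemma finite_ellipse_ray:
  fixes d c1 c2 :: "'a::real_inner"
  assumes "a > 0" "dist c1 c2 < 2 * a" "norm d = 1"
  shows "finite {r. norm (r *\<^sub>R d - c1) + norm (r *\<^sub>R d - c2) = 2 * a}"
proof -
  define \<alpha> where "\<alpha> = (4 * a^2 + c2 \<bullet> c2 - c1 \<bullet> c1) / (4 * a)"
  define G where "G = (1 / (2 * a)) *\<^sub>R (c1 - c2)"
  define k where "k = (\<lambda>i::nat. [c2 \<bullet> c2 - \<alpha>^2, - 2 * (c2 \<bullet> d) - 2 * \<alpha> * (G \<bullet> d), 1 - (G \<bullet> d)^2] ! i)"
  have "norm G < 1" using assms(1,2) by (simp add: G_def dist_norm norm_minus_commute)
  then have "\<bar>G \<bullet> d\<bar> < 1" using Cauchy_Schwarz_ineq2[of G d] assms(3) by simp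
  then have "(G \<bullet> d)^2 < 1" by (simp add: abs_square_less_1)
  then have "k 2 \<noteq> 0" by (simp add: k_def)
  then have fin: "finite {r. (\<Sum>i\<le>2. k i * r^i) = 0}" by (rule polyfun_roots_finite) simp
  have root: "(\<Sum>i\<le>2. k i * r^i) = 0" if "norm (r *\<^sub>R d - c1) + norm (r *\<^sub>R d - c2) = 2 * a" for r
  proof -
    have "norm (r *\<^sub>R d - c2)^2 = (\<alpha> + r * (G \<bullet> d))^2"
      using ellipse_focal_form[OF assms(1) that] by (simp add: \<alpha>_def G_def)
    moreover have "d \<bullet> d = 1" using assms(3) by (simp flip: power2_norm_eq_inner)
    then have "norm (r *\<^sub>R d - c2)^2 = r^2 - 2 * r * (c2 \<bullet> d) + c2 \<bullet> c2"
      unfolding power2_norm_eq_inner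
      by (simp add: inner_diff_left inner_diff_right inner_commute power2_eq_square algebra_simps)
    ultimately show ?thesis
      by (simp add: k_def eval_nat_numeral algebra_simps power2_eq_square)
  qed
  show ?thesis by (rule finite_subset[OF _ fin]) (use root in blast)
qed

lemma circle_rational_param:
  fixes x y :: real
  assumes "x^2 + y^2 = 1" "x \<noteq> -1"
  defines "t \<equiv> y / (1 + x)"
  shows "x = (1 - t^2) / (1 + t^2)" "y = 2 * t / (1 + t^2)"
proof -
  have "x^2 \<le> 1" using assms(1) by (metis le_add_same_cancel1 zero_le_power2)
  then have "\<bar>x\<bar> \<le> 1" by (simp add: abs_square_le_1)
  then have "1 + x > 0" using assms(2) by linarith
  moreover have "y^2 = (1 - x) * (1 + x)" using assms(1) by (simp add: algebra_simps power2_eq_square)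
  with \<open>1 + x > 0\<close> have tt: "t^2 = (1 - x) / (1 + x)"
    unfolding t_def power_divide by (simp add: power2_eq_square)
  ultimately show "x = (1 - t^2) / (1 + t^2)" "y = 2 * t / (1 + t^2)"
    unfolding tt by (simp_all add: t_def field_simps)
qed

lemma quadratic_vanishing_on_unit_circle:
  fixes k0 k1 k2 k3 k4 k5 :: real
  defines "f \<equiv> \<lambda>x y. k0 + k1 * x + k2 * y + k3 * x^2 + k4 * x * y + k5 * y^2"
  assumes inf: "infinite {(x, y). x^2 + y^2 = 1 \<and> f x y = 0}"
    and xy: "x^2 + y^2 = 1"
  shows "f x y = 0"
proof -
  define c where "c = (\<lambda>i::nat.
    [k0 + k1 + k3, 2 * k2 + 2 * k4, 2 * k0 - 2 * k3 + 4 * k5, 2 * k2 - 2 * k4, k0 - k1 + k3] ! i)"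
  define \<psi> where "\<psi> = (\<lambda>t::real. ((1 - t^2) / (1 + t^2), 2 * t / (1 + t^2)))"
  have quartic: "(1 + t^2)^2 * f (fst (\<psi> t)) (snd (\<psi> t)) = (\<Sum>i\<le>4. c i * t^i)" for t
  proof -
    define u where "u = 1 + t^2"
    have "u \<noteq> 0" unfolding u_def by (metis add_pos_nonneg zero_le_power2 zero_less_one less_irrefl)
    then have "u^2 * f (b1 / u) (b2 / u)
        = k0 * u^2 + k1 * b1 * u + k2 * b2 * u + k3 * b1^2 + k4 * b1 * b2 + k5 * b2^2" for b1 b2
      by (simp add: f_def power2_eq_square algebra_simps)
    from this[of "1 - t^2" "2 * t"] show ?thesis
      by (simp add: \<psi>_def u_def[symmetric]) (simp add: u_def c_def eval_nat_numeral algebra_simps)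
  qed
  have param: "\<psi> (y' / (1 + x')) = (x', y')" if "x'^2 + y'^2 = 1" "x' \<noteq> -1" for x' y'
    using circle_rational_param[OF that] by (simp add: \<psi>_def)
  have c0: "c i = 0" if "i \<le> 4" for i
  proof (rule ccontr)
    assume "c i \<noteq> 0"
    then have "finite {t. (\<Sum>i\<le>4. c i * t^i) = 0}" using that by (rule polyfun_roots_finite)
    moreover have "{(x, y). x^2 + y^2 = 1 \<and> f x y = 0}
        \<subseteq> insert (-1, 0) (\<psi> ` {t. (\<Sum>i\<le>4. c i * t^i) = 0})"
    proof clarify
      fix x' y' assume xy': "x'^2 + y'^2 = 1" "f x' y' = 0"
        "(x', y') \<notin> \<psi> ` {t. (\<Sum>i\<le>4. c i * t^i) = 0}"
      show "x' = -1 \<and> y' = 0"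
      proof (cases "x' = -1")
        case True then show ?thesis using xy' by simp
      next
        case False
        then have "(x', y') \<in> \<psi> ` {t. (\<Sum>i\<le>4. c i * t^i) = 0}"
          using quartic[of "y' / (1 + x')"] param[OF xy'(1) False] xy'(2)
          by (intro image_eqI[where x = "y' / (1 + x')"]) simp_all
        with xy'(3) show ?thesis by contradiction
      qed
    qed
    ultimately show False using inf finite_subset by blast
  qed
  show ?thesis
  proof (cases "x = -1")
    case True
    then have "y = 0" using xy by simp
    with True c0[of 4] show ?thesis by (simp add: f_def c_def)
  next
    case False
    have "(1 + (y / (1 + x))^2)^2 * f x y = 0"
      using quartic[of "y / (1 + x)"] param[OF xy False] c0 by simp
    moreover have "(1 + (y / (1 + x))^2)^2 \<noteq> 0"
      by (metis add_pos_nonneg zero_le_power2 zero_less_one less_irrefl power_not_zero)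
    ultimately show ?thesis by simp
  qed
qed

lemma plane_orthonormal_basis:
  fixes Z :: "'a::euclidean_space"
  assumes dim: "DIM('a) = 3" and unitZ: "norm Z = 1"
  obtains u1 u2 where "u1 \<bullet> u1 = 1" "u2 \<bullet> u2 = 1" "u1 \<bullet> u2 = 0" "Z \<bullet> u1 = 0" "Z \<bullet> u2 = 0"
    "\<And>d. Z \<bullet> d = 0 \<Longrightarrow> d = (d \<bullet> u1) *\<^sub>R u1 + (d \<bullet> u2) *\<^sub>R u2"
proof -
  have "Z \<noteq> 0" using unitZ by auto
  obtain B where B: "B \<subseteq> {x. Z \<bullet> x = 0}" "pairwise orthogonal B" "\<And>x. x \<in> B \<Longrightarrow> norm x = 1"
      "independent B" "card B = dim {x. Z \<bullet> x = 0}" "span B = {x. Z \<bullet> x = 0}"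
    using orthonormal_basis_subspace[OF subspace_hyperplane[of Z]] by metis
  have "card B = 2" using B(5) dim_hyperplane[OF \<open>Z \<noteq> 0\<close>] dim by simp
  then obtain u1 u2 where u: "B = {u1, u2}" "u1 \<noteq> u2" by (auto simp: card_2_iff)
  have u12: "u1 \<bullet> u2 = 0" using B(2) u unfolding pairwise_def orthogonal_def by auto
  have u11: "u1 \<bullet> u1 = 1" and u22: "u2 \<bullet> u2 = 1"
    using B(3) u by (auto simp flip: power2_norm_eq_inner)
  show ?thesis
  proof (rule that[OF u11 u22 u12])
    show "Z \<bullet> u1 = 0" "Z \<bullet> u2 = 0" using B(1) u by auto
    fix d assume "Z \<bullet> d = 0"
    then have "d \<in> span {u1, u2}" using B(6) u by auto
    then obtain x y where d: "d = x *\<^sub>R u1 + y *\<^sub>R u2"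
      unfolding span_insert span_singleton by (auto simp: scaleR_conv_of_real) (metis add.commute diff_eq_eq)
    have "u2 \<bullet> u1 = 0" using u12 by (simp add: inner_commute)
    then have "d \<bullet> u1 = x" "d \<bullet> u2 = y"
      using d u11 u22 u12 by (simp_all add: inner_add_left)
    with d show "d = (d \<bullet> u1) *\<^sub>R u1 + (d \<bullet> u2) *\<^sub>R u2" by simp
  qed
qed

lemma plane_quadratic_vanishing_on_circle:
  fixes Z B X1 Y1 X2 Y2 :: "'a::euclidean_space" and c :: real
  defines "H \<equiv> \<lambda>d. c + B \<bullet> d + (X1 \<bullet> d) * (Y1 \<bullet> d) + (X2 \<bullet> d) * (Y2 \<bullet> d)"
  assumes dim: "DIM('a) = 3" and unitZ: "norm Z = 1"
    and inf: "infinite {d. Z \<bullet> d = 0 \<and> norm d = 1 \<and> H d = 0}"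
    and d: "Z \<bullet> d = 0" "norm d = 1"
  shows "H d = 0"
proof -
  obtain u1 u2 where u: "u1 \<bullet> u1 = 1" "u2 \<bullet> u2 = 1" "u1 \<bullet> u2 = 0"
      and coord: "\<And>d. Z \<bullet> d = 0 \<Longrightarrow> d = (d \<bullet> u1) *\<^sub>R u1 + (d \<bullet> u2) *\<^sub>R u2"
    using plane_orthonormal_basis[OF dim unitZ] by metis
  define f where "f = (\<lambda>x y. c + (B \<bullet> u1) * x + (B \<bullet> u2) * y
      + ((X1 \<bullet> u1) * (Y1 \<bullet> u1) + (X2 \<bullet> u1) * (Y2 \<bullet> u1)) * x^2
      + ((X1 \<bullet> u1) * (Y1 \<bullet> u2) + (X1 \<bullet> u2) * (Y1 \<bullet> u1)
         + (X2 \<bullet> u1) * (Y2 \<bullet> u2) + (X2 \<bullet> u2) * (Y2 \<bullet> u1)) * x * y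
      + ((X1 \<bullet> u2) * (Y1 \<bullet> u2) + (X2 \<bullet> u2) * (Y2 \<bullet> u2)) * y^2)"
  have H_coord: "H d = f (d \<bullet> u1) (d \<bullet> u2)" if "Z \<bullet> d = 0" for d
    by (subst coord[OF that]) (simp add: H_def f_def inner_add_right algebra_simps power2_eq_square)
  have circle: "(d \<bullet> u1)^2 + (d \<bullet> u2)^2 = 1" if "Z \<bullet> d = 0" "norm d = 1" for d
  proof -
    have "1 = d \<bullet> d" using that(2) by (simp flip: power2_norm_eq_inner)
    also have "\<dots> = (d \<bullet> u1)^2 + (d \<bullet> u2)^2"
      by (subst (1 2) coord[OF that(1)])
        (simp add: u inner_add_left inner_add_right inner_commute power2_eq_square)
    finally show ?thesis by simp
  qed
  let ?coords = "\<lambda>d. (d \<bullet> u1, d \<bullet> u2)"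
  have "inj_on ?coords {d. Z \<bullet> d = 0}"
  proof (rule inj_onI)
    fix x y assume "x \<in> {d. Z \<bullet> d = 0}" "y \<in> {d. Z \<bullet> d = 0}" "?coords x = ?coords y"
    then show "x = y" using coord[of x] coord[of y] by auto
  qed
  then have "infinite (?coords ` {d. Z \<bullet> d = 0 \<and> norm d = 1 \<and> H d = 0})"
    using inf by (metis (no_types, lifting) finite_imageD inj_on_subset mem_Collect_eq subsetI)
  moreover have "?coords ` {d. Z \<bullet> d = 0 \<and> norm d = 1 \<and> H d = 0}
      \<subseteq> {(x, y). x^2 + y^2 = 1 \<and> f x y = 0}"
    using circle H_coord by auto
  ultimately have "infinite {(x, y). x^2 + y^2 = 1 \<and> f x y = 0}"
    using finite_subset by blast
  from quadratic_vanishing_on_unit_circle[OF this[unfolded f_def] circle[OF d]]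
  show ?thesis by (simp add: H_coord[OF d(1)] f_def)
qed

lemma plane_orthogonal_unit_exists:
  fixes Z w :: "'a::euclidean_space"
  assumes dim: "DIM('a) = 3" and unitZ: "norm Z = 1"
  obtains d where "Z \<bullet> d = 0" "norm d = 1" "w \<bullet> d = 0"
proof -
  obtain u1 u2 where u: "u1 \<bullet> u1 = 1" "u2 \<bullet> u2 = 1" "u1 \<bullet> u2 = 0" "Z \<bullet> u1 = 0" "Z \<bullet> u2 = 0"
    using plane_orthonormal_basis[OF dim unitZ] by metis
  define d where "d = (w \<bullet> u2) *\<^sub>R u1 - (w \<bullet> u1) *\<^sub>R u2"
  show ?thesis
  proof (cases "d = 0")
    case True
    have "d \<bullet> u2 = - (w \<bullet> u1)" using u by (simp add: d_def inner_diff_left)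
    with True have "w \<bullet> u1 = 0" by simp
    with u show ?thesis by (intro that[of u1]) (simp_all add: norm_eq_1 inner_commute)
  next
    case False
    have "Z \<bullet> d = 0" "w \<bullet> d = 0" using u by (simp_all add: d_def inner_diff_right)
    with False show ?thesis
      by (intro that[of "d /\<^sub>R norm d"]) simp_all
  qed
qed

lemma product_of_linear_forms_zero:
  fixes Z u w :: "'a::real_inner"
  assumes "Z \<bullet> u = 0" "Z \<bullet> w = 0" and prod: "\<And>x. Z \<bullet> x = 0 \<Longrightarrow> (u \<bullet> x) * (w \<bullet> x) = 0"
  shows "u = 0 \<or> w = 0"
proof (rule ccontr)
  assume "\<not> (u = 0 \<or> w = 0)"
  then have "u \<bullet> u \<noteq> 0" "w \<bullet> w \<noteq> 0" by simp_all
  moreover have "(u \<bullet> u) * (w \<bullet> u) = 0" "(u \<bullet> w) * (w \<bullet> w) = 0"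
    using prod assms(1,2) by blast+
  ultimately have "w \<bullet> u = 0" "u \<bullet> w = 0" by simp_all
  moreover have "(u \<bullet> (u + w)) * (w \<bullet> (u + w)) = 0"
    using prod[of "u + w"] assms(1,2) by (simp only: inner_add_right)
  ultimately show False using \<open>u \<bullet> u \<noteq> 0\<close> \<open>w \<bullet> w \<noteq> 0\<close> by (simp add: inner_add_right)
qed

lemma focal_quadratic_form_rigidity:
  fixes Z A G :: "'a::euclidean_space" and p b :: real
  assumes dim: "DIM('a) = 3" and unitZ: "norm Z = 1"
    and plane: "Z \<bullet> A = 0" "Z \<bullet> G = 0" and G: "G \<bullet> G < 1" and p: "p \<noteq> 0"
    and form: "\<And>x. Z \<bullet> x = 0 \<Longrightarrow> (p^2 + b) * (x \<bullet> x) = b * (A \<bullet> x)^2 + p^2 * (G \<bullet> x)^2"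
  shows "b = - (p^2)" "A = G \<or> A = - G"
proof -
  obtain e where e: "Z \<bullet> e = 0" "norm e = 1" "A \<bullet> e = 0"
    using plane_orthogonal_unit_exists[OF dim unitZ] by metis
  obtain d where d: "Z \<bullet> d = 0" "norm d = 1" "G \<bullet> d = 0"
    using plane_orthogonal_unit_exists[OF dim unitZ] by metis
  have "\<bar>G \<bullet> e\<bar>^2 \<le> norm G^2"
    using power_mono[OF Cauchy_Schwarz_ineq2[of G e], of 2] e(2) by simp
  then have "(G \<bullet> e)^2 \<le> G \<bullet> G" by (simp add: power2_norm_eq_inner)
  then have "(G \<bullet> e)^2 < 1" using G by simp
  moreover have "p^2 + b = p^2 * (G \<bullet> e)^2" using form[OF e(1)] e by (simp add: norm_eq_1)
  moreover have "p^2 > 0" using p by simp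
  ultimately have "0 \<le> p^2 + b" "b < 0"
    by (simp, metis add_less_same_cancel1 mult.right_neutral mult_less_cancel_left_pos)
  moreover have "p^2 + b = b * (A \<bullet> d)^2" using form[OF d(1)] d by (simp add: norm_eq_1)
  ultimately show b: "b = - (p^2)" by (smt (verit) mult_nonpos_nonneg zero_le_power2)
  have "((A - G) \<bullet> x) * ((A + G) \<bullet> x) = 0" if "Z \<bullet> x = 0" for x
    using form[OF that] p unfolding b
    by (simp add: inner_diff_left inner_add_left algebra_simps power2_eq_square)
  then have "A - G = 0 \<or> A + G = 0"
    by (intro product_of_linear_forms_zero[of Z]) (simp_all add: plane inner_diff_right inner_add_right)
  then show "A = G \<or> A = - G" by (auto simp: eq_neg_iff_add_eq_0)
qed

lemma semi_latus_rectum_eq: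
  fixes \<epsilon> n p a \<alpha> :: real
  assumes "\<epsilon>^2 = 1" "n < 1" "p > 0" "a > 0"
    and \<alpha>: "\<alpha> = a * (1 - n) + (p * \<epsilon> + \<alpha>) * n"
    and bb: "(p * \<epsilon> + \<alpha>)^2 * n - \<alpha>^2 = - (p^2)"
  shows "p = a * (1 - n)"
proof -
  have X: "\<alpha> * (1 - n) = a * (1 - n) + p * \<epsilon> * n" and Y: "(p * \<epsilon> + \<alpha>) * (1 - n) = p * \<epsilon> + a * (1 - n)"
    using \<alpha> by (simp_all add: algebra_simps)
  have "((p * \<epsilon> + \<alpha>) * (1 - n))^2 * n - (\<alpha> * (1 - n))^2 = ((p * \<epsilon> + \<alpha>)^2 * n - \<alpha>^2) * (1 - n)^2"
    by algebra
  then have "(p * \<epsilon> + a * (1 - n))^2 * n - (a * (1 - n) + p * \<epsilon> * n)^2 = - (p^2 * (1 - n)^2)"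
    unfolding X Y bb by simp
  then have "(1 - n) * (p^2 - a^2 * (1 - n)^2) = 0"
    using assms(1) by algebra
  then have "p^2 = (a * (1 - n))^2" using assms(2) by (simp add: power_mult_distrib)
  moreover have "a * (1 - n) > 0" using assms(2,4) by simp
  ultimately show ?thesis using assms(3) by (simp add: power2_eq_iff)
qed

lemma focal_quadratic_parity:
  fixes Z A K G :: "'a::real_inner" and p b :: real
  defines "H \<equiv> \<lambda>d. p^2 + b + 2 * b * (A \<bullet> d) - 2 * p * (K \<bullet> d)
                    + b * (A \<bullet> d)^2 - 2 * p * (A \<bullet> d) * (K \<bullet> d) - p^2 * (G \<bullet> d)^2"
  assumes plane: "Z \<bullet> A = 0" "Z \<bullet> K = 0"
    and H0: "\<And>d. Z \<bullet> d = 0 \<Longrightarrow> norm d = 1 \<Longrightarrow> H d = 0"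
  shows "b *\<^sub>R A = p *\<^sub>R K"
    and "\<And>x. Z \<bullet> x = 0 \<Longrightarrow> (p^2 + b) * (x \<bullet> x) = b * (A \<bullet> x)^2 + p^2 * (G \<bullet> x)^2"
proof -
  define V where "V = b *\<^sub>R A - p *\<^sub>R K"
  have odd: "V \<bullet> d = 0" if "Z \<bullet> d = 0" "norm d = 1" for d
  proof -
    have "H d - H (- d) = 4 * (V \<bullet> d)" by (simp add: H_def V_def inner_diff_left algebra_simps)
    with H0[OF that] H0[of "- d"] that show ?thesis by simp
  qed
  have "V = 0"
  proof (rule ccontr)
    assume "V \<noteq> 0"
    moreover have "Z \<bullet> V = 0" using plane by (simp add: V_def inner_diff_right)
    ultimately have "V \<bullet> (V /\<^sub>R norm V) = 0" by (intro odd) simp_all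
    with \<open>V \<noteq> 0\<close> show False by simp
  qed
  then show pK: "b *\<^sub>R A = p *\<^sub>R K" by (simp add: V_def)
  have even: "p^2 + b - b * (A \<bullet> d)^2 - p^2 * (G \<bullet> d)^2 = 0" if "Z \<bullet> d = 0" "norm d = 1" for d
  proof -
    have "p * (K \<bullet> d) = b * (A \<bullet> d)" using arg_cong[OF pK, of "\<lambda>v. v \<bullet> d"] by simp
    then have "H d + H (- d) = 2 * (p^2 + b - b * (A \<bullet> d)^2 - p^2 * (G \<bullet> d)^2)"
      by (simp add: H_def algebra_simps power2_eq_square)
    with H0[OF that] H0[of "- d"] that show ?thesis by simp
  qed
  show "(p^2 + b) * (x \<bullet> x) = b * (A \<bullet> x)^2 + p^2 * (G \<bullet> x)^2" if x: "Z \<bullet> x = 0" for x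
  proof (cases "x = 0")
    case False
    have "(p^2 + b - b * (A \<bullet> (x /\<^sub>R norm x))^2 - p^2 * (G \<bullet> (x /\<^sub>R norm x))^2) * (norm x)^2
        = (p^2 + b) * (x \<bullet> x) - b * (A \<bullet> x)^2 - p^2 * (G \<bullet> x)^2"
      using False by (simp add: power2_norm_eq_inner[symmetric] field_simps power2_eq_square)
    with even[of "x /\<^sub>R norm x"] x False show ?thesis by simp
  qed simp
qed

text \<open>The quadratic below is the squared focal equation of the ellipse at the point \<open>r d\<close> of the
  conic \<open>r (1 + A \<bullet> d) = p\<close>, multiplied by \<open>(1 + A \<bullet> d)\<^sup>2\<close> to clear \<open>r\<close>.\<close>

lemma ellipse_focal_quadratic_at_conic_point:
  fixes A c1 c2 d :: "'a::real_inner" and a p r :: real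
  defines "G \<equiv> (1 / (2 * a)) *\<^sub>R (c1 - c2)" and "\<alpha> \<equiv> (4 * a^2 + c2 \<bullet> c2 - c1 \<bullet> c1) / (4 * a)"
  defines "b \<equiv> c2 \<bullet> c2 - \<alpha>^2" and "K \<equiv> c2 + \<alpha> *\<^sub>R G"
  assumes "a > 0" "norm d = 1" and conic: "r * (1 + A \<bullet> d) = p"
    and ellipse: "norm (r *\<^sub>R d - c1) + norm (r *\<^sub>R d - c2) = 2 * a"
  shows "p^2 + b + 2 * b * (A \<bullet> d) - 2 * p * (K \<bullet> d)
           + b * (A \<bullet> d)^2 - 2 * p * (A \<bullet> d) * (K \<bullet> d) - p^2 * (G \<bullet> d)^2 = 0"
proof -
  have "norm (r *\<^sub>R d - c2)^2 = (\<alpha> + r * (G \<bullet> d))^2"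
    using ellipse_focal_form[OF assms(5) ellipse] by (simp add: \<alpha>_def G_def)
  moreover have "d \<bullet> d = 1" using assms(6) by (simp flip: power2_norm_eq_inner)
  then have "norm (r *\<^sub>R d - c2)^2 = r^2 - 2 * r * (c2 \<bullet> d) + c2 \<bullet> c2"
    unfolding power2_norm_eq_inner
    by (simp add: inner_diff_left inner_diff_right inner_commute power2_eq_square algebra_simps)
  moreover have "p^2 + b + 2 * b * (A \<bullet> d) - 2 * p * (K \<bullet> d)
      + b * (A \<bullet> d)^2 - 2 * p * (A \<bullet> d) * (K \<bullet> d) - p^2 * (G \<bullet> d)^2
      = (1 + A \<bullet> d)^2 * ((r^2 - 2 * r * (c2 \<bullet> d) + c2 \<bullet> c2) - (\<alpha> + r * (G \<bullet> d))^2)"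
    unfolding b_def K_def conic[symmetric] by (simp add: inner_add_left) algebra
  ultimately show ?thesis by simp
qed

lemma ellipse_parameter_from_focal_data:
  fixes c1 c2 :: "'a::real_inner" and a e p \<epsilon> :: real
  defines "G \<equiv> (1 / (2 * a)) *\<^sub>R (c1 - c2)" and "\<alpha> \<equiv> (4 * a^2 + c2 \<bullet> c2 - c1 \<bullet> c1) / (4 * a)"
  assumes "a > 0" "p > 0" "\<epsilon>^2 = 1" and GG: "G \<bullet> G = e^2" "e^2 < 1"
    and c2: "(- (p * \<epsilon>)) *\<^sub>R G = c2 + \<alpha> *\<^sub>R G" and b: "c2 \<bullet> c2 - \<alpha>^2 = - (p^2)"
  shows "p = a * (1 - e^2)"
proof -
  have \<alpha>_G: "\<alpha> = a * (1 - e^2) - c2 \<bullet> G"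
  proof -
    have "c1 = c2 + (2 * a) *\<^sub>R G" using assms(3) by (simp add: G_def)
    then have "c1 \<bullet> c1 = c2 \<bullet> c2 + 4 * a * (c2 \<bullet> G) + 4 * a^2 * (G \<bullet> G)"
      by (simp add: inner_add_left inner_add_right inner_commute power2_eq_square algebra_simps)
    then show ?thesis unfolding \<alpha>_def GG using assms(3) by (simp add: field_simps power2_eq_square)
  qed
  have "c2 = (- (p * \<epsilon>)) *\<^sub>R G - \<alpha> *\<^sub>R G" using c2 by (metis eq_diff_eq)
  then have c2: "c2 = (- (p * \<epsilon> + \<alpha>)) *\<^sub>R G"
    by (simp only: minus_add_distrib scaleR_add_left scaleR_minus_left diff_conv_add_uminus)
  have "c2 \<bullet> G = - ((p * \<epsilon> + \<alpha>) * e^2)" using GG by (simp add: c2 algebra_simps)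
  with \<alpha>_G have "\<alpha> = a * (1 - e^2) + (p * \<epsilon> + \<alpha>) * e^2" by linarith
  moreover have "(p * \<epsilon> + \<alpha>)^2 * e^2 - \<alpha>^2 = - (p^2)"
    using b GG by (simp add: c2 power2_eq_square algebra_simps)
  ultimately show ?thesis using semi_latus_rectum_eq[OF assms(5) GG(2) assms(4,3)] by simp
qed

lemma kepler_conic_matches_ellipse:
  fixes Z A c1 c2 :: "'a::euclidean_space" and p a e :: real
  assumes dim: "DIM('a) = 3" and unitZ: "norm Z = 1"
    and ae: "a > 0" "e < 1" and foci: "Z \<bullet> c1 = 0" "Z \<bullet> c2 = 0" "dist c1 c2 = 2 * a * e"
    and A: "Z \<bullet> A = 0" and p: "p > 0"
    and inf: "infinite {d. Z \<bullet> d = 0 \<and> norm d = 1 \<and>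
                (\<exists>r. r * (1 + A \<bullet> d) = p \<and> norm (r *\<^sub>R d - c1) + norm (r *\<^sub>R d - c2) = 2 * a)}"
  shows "p = a * (1 - e^2)" "A \<bullet> A = e^2"
proof -
  define G where "G = (1 / (2 * a)) *\<^sub>R (c1 - c2)"
  define \<alpha> where "\<alpha> = (4 * a^2 + c2 \<bullet> c2 - c1 \<bullet> c1) / (4 * a)"
  define b where "b = c2 \<bullet> c2 - \<alpha>^2"
  define K where "K = c2 + \<alpha> *\<^sub>R G"
  define H where "H = (\<lambda>d. p^2 + b + 2 * b * (A \<bullet> d) - 2 * p * (K \<bullet> d)
                    + b * (A \<bullet> d)^2 - 2 * p * (A \<bullet> d) * (K \<bullet> d) - p^2 * (G \<bullet> d)^2)"
  have "0 \<le> e" using ae(1) foci(3) zero_le_dist[of c1 c2] by (simp add: zero_le_mult_iff)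
  then have GG: "G \<bullet> G = e^2" "e^2 < 1"
    using ae foci(3) by (simp_all add: G_def dist_norm power_less_one_iff flip: power2_norm_eq_inner)
  have plane: "Z \<bullet> G = 0" "Z \<bullet> K = 0"
    using foci by (simp_all add: G_def K_def inner_diff_right inner_add_right)
  have inf_H: "infinite {d. Z \<bullet> d = 0 \<and> norm d = 1 \<and> H d = 0}"
    using ellipse_focal_quadratic_at_conic_point[OF ae(1), of _ _ A p c1 c2]
    by (rule_tac infinite_super[OF _ inf]) (auto simp: H_def b_def K_def \<alpha>_def G_def)
  have H_quadratic: "H = (\<lambda>d. (p^2 + b) + ((2 * b) *\<^sub>R A - (2 * p) *\<^sub>R K) \<bullet> d
      + (A \<bullet> d) * ((b *\<^sub>R A - (2 * p) *\<^sub>R K) \<bullet> d) + ((p *\<^sub>R G) \<bullet> d) * (((- p) *\<^sub>R G) \<bullet> d))"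
    by (rule ext) (simp add: H_def inner_diff_left algebra_simps power2_eq_square)
  have H0: "H d = 0" if "Z \<bullet> d = 0" "norm d = 1" for d
    using plane_quadratic_vanishing_on_circle[OF dim unitZ inf_H[unfolded H_quadratic] that]
    unfolding H_quadratic .
  have bA: "b *\<^sub>R A = p *\<^sub>R K"
    and form: "\<And>x. Z \<bullet> x = 0 \<Longrightarrow> (p^2 + b) * (x \<bullet> x) = b * (A \<bullet> x)^2 + p^2 * (G \<bullet> x)^2"
    using focal_quadratic_parity[OF A plane(2), of p b G] H0 unfolding H_def by blast+
  have "G \<bullet> G < 1" "p \<noteq> 0" using GG p by simp_all
  note rigid = focal_quadratic_form_rigidity[OF dim unitZ A plane(1) this form]
  have b: "b = - (p^2)" by (rule rigid(1))
  obtain \<epsilon> where \<epsilon>: "\<epsilon>^2 = 1" "A = \<epsilon> *\<^sub>R G"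
    using rigid(2)
  proof
    assume "A = G" then show ?thesis by (intro that[of 1]) simp_all
  next
    assume "A = - G" then show ?thesis by (intro that[of "-1"]) simp_all
  qed
  have "p *\<^sub>R ((- (p * \<epsilon>)) *\<^sub>R G) = p *\<^sub>R (c2 + \<alpha> *\<^sub>R G)"
    using bA unfolding b \<epsilon>(2) K_def by (simp add: power2_eq_square mult.assoc)
  then have "(- (p * \<epsilon>)) *\<^sub>R G = c2 + \<alpha> *\<^sub>R G" using p by (metis scaleR_cancel_left less_irrefl)
  with b show "p = a * (1 - e^2)"
    using ellipse_parameter_from_focal_data[OF ae(1) p \<epsilon>(1) GG[unfolded G_def]]
    by (simp add: G_def \<alpha>_def b_def)
  show "A \<bullet> A = e^2" using \<epsilon> GG by (simp add: power2_eq_square)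
qed

section \<open>Kepler arcs on an ellipse\<close>

locale kepler_arc_on_ellipse = kepler_arc Q W \<alpha> t0 t1
  for Q W :: "real \<Rightarrow> 'a::euclidean_space" and \<alpha> t0 t1 +
  fixes Z :: 'a and a e :: real and S :: "'a set"
  assumes dim: "DIM('a) = 3" and unitZ: "norm Z = 1"
    and ellipse: "is_ellipse Z a e S"
    and on_ellipse: "t \<in> {t0<..<t1} \<Longrightarrow> Q t \<in> S"
begin

lemma ellipse_data:
  obtains c1 c2 where "0 < a" "0 \<le> e" "e < 1" "Z \<bullet> c1 = 0" "Z \<bullet> c2 = 0" "dist c1 c2 = 2 * a * e"
    "\<And>t. t \<in> {t0<..<t1} \<Longrightarrow> Z \<bullet> Q t = 0 \<and> norm (Q t - c1) + norm (Q t - c2) = 2 * a"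
  using ellipse on_ellipse unfolding is_ellipse_def by (auto simp: dist_norm)

lemma Q_planar: "t \<in> {t0<..<t1} \<Longrightarrow> Z \<bullet> Q t = 0"
  using ellipse_data by metis

lemma W_planar:
  assumes t: "t \<in> {t0<..<t1}"
  shows "Z \<bullet> W t = 0"
proof -
  have "((\<lambda>t. Z \<bullet> Q t) has_real_derivative 0) (at t)"
    unfolding has_real_derivative_iff_has_vector_derivative
    by (rule has_vector_derivative_transform_within_open[where f = "\<lambda>t. 0" and S = "{t0<..<t1}"])
       (use t Q_planar in auto)
  with has_real_derivative_inner[OF has_vector_derivative_const[of Z] Q_deriv[OF t]]
  have "\<alpha> t * (Z \<bullet> W t) = 0" using DERIV_unique by fastforce
  with time_factor_pos[OF t] show ?thesis by simp
qed

lemma direction_not_constant: "\<not> (\<forall>t\<in>{t0<..<t1}. (1 / norm (Q t)) *\<^sub>R Q t = d)"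
proof
  assume d: "\<forall>t\<in>{t0<..<t1}. (1 / norm (Q t)) *\<^sub>R Q t = d"
  obtain c1 c2 where ae: "0 < a" "e < 1" and foci: "dist c1 c2 = 2 * a * e"
    and S: "\<And>t. t \<in> {t0<..<t1} \<Longrightarrow> norm (Q t - c1) + norm (Q t - c2) = 2 * a"
    using ellipse_data by metis
  have "dist c1 c2 < 2 * a" using ae foci by simp
  have Q_ray: "Q t = norm (Q t) *\<^sub>R d" if "t \<in> {t0<..<t1}" for t
  proof -
    have "d = (1 / norm (Q t)) *\<^sub>R Q t" using d that by simp
    with Q_nonzero[OF that] show ?thesis by simp
  qed
  obtain t where t: "t \<in> {t0<..<t1}" using interval_nonempty dense by (metis greaterThanLessThan_iff)
  then have "norm d = 1" using d Q_nonzero[OF t] by auto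
  \<comment> \<open>a ray meets the ellipse in finitely many points, so the continuous radius is constant\<close>
  have cont: "continuous_on {t0<..<t1} (\<lambda>t. norm (Q t))"
    using Q_deriv by (intro continuous_intros continuous_at_imp_continuous_on)
      (metis has_vector_derivative_continuous)
  have range: "(\<lambda>t. norm (Q t)) ` {t0<..<t1} \<subseteq> {r. norm (r *\<^sub>R d - c1) + norm (r *\<^sub>R d - c2) = 2 * a}"
    using S Q_ray by (auto simp del: norm_scaleR)
  obtain r where "\<And>t. t \<in> {t0<..<t1} \<Longrightarrow> norm (Q t) = r"
    using continuous_on_finite_range_imp_constant[OF cont range
        finite_ellipse_ray[OF ae(1) \<open>dist c1 c2 < 2 * a\<close> \<open>norm d = 1\<close>]] by blast
  with Q_ray have "\<forall>t\<in>{t0<..<t1}. Q t = r *\<^sub>R d" by simp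
  with Q_not_constant show False by blast
qed

lemma angular_momentum_sq_pos:
  obtains p where "p > 0" "\<And>t. t \<in> {t0<..<t1} \<Longrightarrow> angular_momentum_sq (Q t) (W t) = p"
proof -
  obtain p where p: "\<And>t. t \<in> {t0<..<t1} \<Longrightarrow> angular_momentum_sq (Q t) (W t) = p"
    using angular_momentum_sq_constant by blast
  obtain t where t: "t \<in> {t0<..<t1}" using interval_nonempty dense by (metis greaterThanLessThan_iff)
  have "p \<ge> 0" using angular_momentum_sq_nonneg p[OF t] by metis
  moreover have "p \<noteq> 0"
  proof
    assume "p = 0"
    then obtain d where "\<And>t. t \<in> {t0<..<t1} \<Longrightarrow> (1 / norm (Q t)) *\<^sub>R Q t = d"
      using direction_constant_if_angular_momentum_zero p by metis
    with direction_not_constant show False by blast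
  qed
  ultimately have "p > 0" by simp
  then show ?thesis using p by (rule that)
qed

lemma directions_infinite: "infinite ((\<lambda>t. (1 / norm (Q t)) *\<^sub>R Q t) ` {t0<..<t1})"
proof
  assume fin: "finite ((\<lambda>t. (1 / norm (Q t)) *\<^sub>R Q t) ` {t0<..<t1})"
  have "continuous_on {t0<..<t1} (\<lambda>t. (1 / norm (Q t)) *\<^sub>R Q t)"
    using Q_deriv Q_nonzero
    by (intro continuous_at_imp_continuous_on ballI continuous_intros has_vector_derivative_continuous)
      auto
  from continuous_on_finite_range_imp_constant[OF this subset_refl fin] direction_not_constant
  show False by metis
qed

lemma kepler_parameters:
  assumes t: "t \<in> {t0<..<t1}"
  shows "angular_momentum_sq (Q t) (W t) = a * (1 - e^2)"
    and "runge_lenz (Q t) (W t) \<bullet> runge_lenz (Q t) (W t) = e^2"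
proof -
  obtain c1 c2 where ae: "0 < a" "e < 1" and foci: "Z \<bullet> c1 = 0" "Z \<bullet> c2 = 0" "dist c1 c2 = 2 * a * e"
    and S: "\<And>t. t \<in> {t0<..<t1} \<Longrightarrow> norm (Q t - c1) + norm (Q t - c2) = 2 * a"
    using ellipse_data by metis
  obtain A where A: "\<And>t. t \<in> {t0<..<t1} \<Longrightarrow> runge_lenz (Q t) (W t) = A"
    using runge_lenz_constant by blast
  obtain p where p: "p > 0" "\<And>t. t \<in> {t0<..<t1} \<Longrightarrow> angular_momentum_sq (Q t) (W t) = p"
    using angular_momentum_sq_pos by blast
  define D where "D = {d. Z \<bullet> d = 0 \<and> norm d = 1 \<and>
      (\<exists>r. r * (1 + A \<bullet> d) = p \<and> norm (r *\<^sub>R d - c1) + norm (r *\<^sub>R d - c2) = 2 * a)}"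
  \<comment> \<open>the orbit lies on the Kepler conic \<open>r (1 + A \<bullet> d) = p\<close> in polar form \<open>Q = r d\<close>\<close>
  have "(1 / norm (Q s)) *\<^sub>R Q s \<in> D" if s: "s \<in> {t0<..<t1}" for s
  proof -
    have "A \<bullet> Q s = p - norm (Q s)"
      using inner_runge_lenz[OF Q_nonzero[OF s], of "W s"] A[OF s] p(2)[OF s] by simp
    then have "norm (Q s) * (1 + A \<bullet> ((1 / norm (Q s)) *\<^sub>R Q s)) = p"
      using Q_nonzero[OF s] by (simp add: algebra_simps)
    with S[OF s] Q_planar[OF s] Q_nonzero[OF s] show ?thesis
      unfolding D_def by (auto intro!: exI[of _ "norm (Q s)"])
  qed
  then have "infinite D"
    using directions_infinite by (meson image_subsetI infinite_super)
  moreover have "Z \<bullet> A = 0"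
    using A[OF t, symmetric] Q_planar[OF t] W_planar[OF t] by (simp add: runge_lenz_def inner_diff_right)
  ultimately have "p = a * (1 - e^2)" "A \<bullet> A = e^2"
    using kepler_conic_matches_ellipse[OF dim unitZ ae foci _ p(1)] unfolding D_def by blast+
  with A[OF t] p(2)[OF t] show "angular_momentum_sq (Q t) (W t) = a * (1 - e^2)"
    and "runge_lenz (Q t) (W t) \<bullet> runge_lenz (Q t) (W t) = e^2" by simp_all
qed

lemma kepler_energy_eq:
  assumes t: "t \<in> {t0<..<t1}"
  shows "kepler_energy (Q t) (W t) = - 1 / (2 * a)"
proof -
  obtain ae: "0 < a" "e < 1" "0 \<le> e" using ellipse_data by metis
  define E where "E = kepler_energy (Q t) (W t)"
  have "e^2 = 1 + 2 * E * (a * (1 - e^2))"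
    using runge_lenz_inner_self[OF Q_nonzero[OF t], of "W t"] kepler_parameters[OF t] by (simp add: E_def)
  then have "(1 - e^2) * (2 * a * E + 1) = 0" by (simp add: algebra_simps)
  moreover have "e^2 < 1" using ae by (simp add: power_less_one_iff)
  ultimately have "2 * a * E = - 1" by simp
  with ae(1) show ?thesis by (simp add: E_def field_simps)
qed

end

section \<open>The central projection of the spherical Kepler problem\<close>

definition Qproj_velocity :: "real \<Rightarrow> 'a::real_inner \<Rightarrow> 'a \<Rightarrow> 'a \<Rightarrow> 'a" where
  "Qproj_velocity R Z q v = hgt R Z q *\<^sub>R v - ((Z \<bullet> v) / R) *\<^sub>R q"

lemma powr_three_halves: "x > 0 \<Longrightarrow> x powr (3/2) = sqrt x ^ 3"
  by (simp add: powr_half_sqrt[symmetric] powr_realpow[symmetric] powr_powr)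

lemma hgt_less_one:
  fixes Z q :: "'a::real_inner"
  assumes "norm Z = 1" "R > 0" "norm q = R" "q \<noteq> R *\<^sub>R Z"
  shows "hgt R Z q < 1"
proof (rule ccontr)
  assume "\<not> hgt R Z q < 1"
  then have "Z \<bullet> q \<ge> R" using assms(2) by (simp add: hgt_def field_simps)
  moreover have "Z \<bullet> q \<le> R" using norm_cauchy_schwarz[of Z q] assms by simp
  ultimately have Zq: "Z \<bullet> q = R" by simp
  have "Z \<bullet> Z = 1" "q \<bullet> q = R^2" using assms(1,3) by (simp_all flip: power2_norm_eq_inner)
  with Zq have "norm (q - R *\<^sub>R Z)^2 = 0"
    unfolding power2_norm_eq_inner by (simp add: algebra_simps inner_commute power2_eq_square)
  with assms(4) show False by simp
qed

lemma norm_Qproj: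
  fixes Z q :: "'a::real_inner"
  assumes "norm Z = 1" "R > 0" "norm q = R" "hgt R Z q > 0"
  shows "norm (Qproj R Z q) = R * sqrt (1 - hgt R Z q ^ 2) / hgt R Z q"
proof -
  let ?h = "hgt R Z q"
  have Zq: "Z \<bullet> q = R * ?h" using assms(2) by (simp add: hgt_def)
  have "Z \<bullet> Z = 1" "q \<bullet> q = R^2" using assms(1,3) by (simp_all flip: power2_norm_eq_inner)
  with Zq assms(4) have "norm (Qproj R Z q)^2 = R^2 * (1 - ?h^2) / ?h^2"
    unfolding Qproj_def power2_norm_eq_inner
    by (simp add: algebra_simps inner_commute field_simps power2_eq_square)
  then have "norm (Qproj R Z q) = sqrt (R^2 * (1 - ?h^2) / ?h^2)"
    by (metis norm_ge_zero real_sqrt_unique)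
  with assms(2,4) show ?thesis by (simp add: real_sqrt_divide real_sqrt_mult)
qed

lemma inner_velocity_zero_on_sphere:
  fixes q v :: "real \<Rightarrow> 'a::real_inner"
  assumes "\<And>t. t \<in> {t0<..<t1} \<Longrightarrow> norm (q t) = R"
    and "\<And>t. t \<in> {t0<..<t1} \<Longrightarrow> (q has_vector_derivative v t) (at t)"
    and t: "t \<in> {t0<..<t1}"
  shows "q t \<bullet> v t = 0"
proof -
  have "((\<lambda>t. q t \<bullet> q t) has_real_derivative 0) (at t)"
    unfolding has_real_derivative_iff_has_vector_derivative
    by (rule has_vector_derivative_transform_within_open[where f = "\<lambda>t. R^2" and S = "{t0<..<t1}"])
       (use t assms(1) in \<open>auto simp: power2_norm_eq_inner[symmetric]\<close>)
  with has_real_derivative_inner[OF assms(2)[OF t] assms(2)[OF t]]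
  have "q t \<bullet> v t + v t \<bullet> q t = 0" using DERIV_unique by blast
  then show ?thesis by (simp add: inner_commute)
qed

lemma hgt_has_real_derivative:
  assumes "(q has_vector_derivative v) (at t)"
  shows "((\<lambda>t. hgt R Z (q t)) has_real_derivative (Z \<bullet> v) / R) (at t)"
  unfolding hgt_def
  using DERIV_cdivide[OF has_real_derivative_inner[OF has_vector_derivative_const[of Z] assms]]
  by simp

lemma Qproj_has_vector_derivative:
  fixes q v :: "real \<Rightarrow> 'a::real_inner"
  assumes hpos: "hgt R Z (q t) > 0" and dq: "(q has_vector_derivative v t) (at t)"
  shows "((\<lambda>t. Qproj R Z (q t)) has_vector_derivative
           (1 / hgt R Z (q t) ^ 2) *\<^sub>R Qproj_velocity R Z (q t) (v t)) (at t)"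
proof -
  let ?h = "hgt R Z (q t)"
  have "((\<lambda>t. 1 / hgt R Z (q t)) has_real_derivative - ((Z \<bullet> v t) / R) / ?h^2) (at t)"
    using DERIV_inverse_fun[OF hgt_has_real_derivative[OF dq]] hpos
    by (simp add: inverse_eq_divide power2_eq_square)
  from has_vector_derivative_scaleR[OF this dq]
  have "((\<lambda>t. Qproj R Z (q t)) has_vector_derivative
      (1 / ?h) *\<^sub>R v t + (- ((Z \<bullet> v t) / R) / ?h^2) *\<^sub>R q t) (at t)"
    unfolding Qproj_def by (rule has_vector_derivative_diff[OF _ has_vector_derivative_const, simplified])
  moreover have "(1 / ?h) *\<^sub>R v t + (- ((Z \<bullet> v t) / R) / ?h^2) *\<^sub>R q t
      = (1 / ?h^2) *\<^sub>R Qproj_velocity R Z (q t) (v t)"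
    using hpos by (simp add: Qproj_velocity_def algebra_simps power2_eq_square divide_simps)
  ultimately show ?thesis by simp
qed

lemma Qproj_velocity_has_vector_derivative:
  fixes Z :: "'a::real_inner" and q v :: "real \<Rightarrow> 'a"
  assumes unitZ: "norm Z = 1" and Rpos: "R > 0" and nq: "norm (q t) = R"
    and hpos: "hgt R Z (q t) > 0" and ne: "q t \<noteq> R *\<^sub>R Z"
    and dq: "(q has_vector_derivative v t) (at t)"
    and dv: "(v has_vector_derivative (bcoef R Z (q t) *\<^sub>R ZB R Z (q t) + lam *\<^sub>R q t)) (at t)"
  shows "((\<lambda>t. Qproj_velocity R Z (q t) (v t)) has_vector_derivative
           (- ((1 / hgt R Z (q t) ^ 2) / norm (Qproj R Z (q t)) ^ 3)) *\<^sub>R Qproj R Z (q t)) (at t)"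
proof -
  let ?h = "hgt R Z (q t)" and ?b = "bcoef R Z (q t)"
  let ?a = "bcoef R Z (q t) *\<^sub>R ZB R Z (q t) + lam *\<^sub>R q t"
  have "((\<lambda>t. (Z \<bullet> v t) / R) has_real_derivative (Z \<bullet> ?a) / R) (at t)"
    using DERIV_cdivide[OF has_real_derivative_inner[OF has_vector_derivative_const[of Z] dv]]
    by simp
  then have "((\<lambda>t. Qproj_velocity R Z (q t) (v t)) has_vector_derivative
      (?h *\<^sub>R ?a + ((Z \<bullet> v t) / R) *\<^sub>R v t) - (((Z \<bullet> v t) / R) *\<^sub>R v t + ((Z \<bullet> ?a) / R) *\<^sub>R q t)) (at t)"
    unfolding Qproj_velocity_def
    by (intro has_vector_derivative_diff has_vector_derivative_scaleR hgt_has_real_derivative dq dv)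
  moreover
  \<comment> \<open>the constraint force \<open>lam q\<close> drops out: the projected force is central\<close>
  have "(?h *\<^sub>R ?a + ((Z \<bullet> v t) / R) *\<^sub>R v t) - (((Z \<bullet> v t) / R) *\<^sub>R v t + ((Z \<bullet> ?a) / R) *\<^sub>R q t)
      = (- (?b * ?h / R)) *\<^sub>R Qproj R Z (q t)"
  proof -
    have Zq: "Z \<bullet> q t = R * ?h" using Rpos by (simp add: hgt_def)
    have "Z \<bullet> Z = 1" using unitZ by (simp flip: power2_norm_eq_inner)
    with Zq Rpos have Za: "Z \<bullet> ?a = ?b * (1 - ?h^2) + lam * R * ?h"
      by (simp add: ZB_def inner_add_right inner_diff_right power2_eq_square)
    have "- ?b * ?h * ?h / R + ?h * lam - (?b * (1 - ?h^2) + lam * R * ?h) / R = - ?b / R"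
      using Rpos by (simp add: field_simps power2_eq_square)
    with Rpos hpos show ?thesis
      unfolding Za by (simp add: ZB_def Qproj_def algebra_simps) (metis scaleR_add_left)
  qed
  moreover have "?b * ?h / R = (1 / ?h^2) / norm (Qproj R Z (q t)) ^ 3"
  proof -
    have "1 - ?h^2 > 0"
      using hgt_less_one[OF unitZ Rpos nq ne] hpos by (simp add: power_less_one_iff)
    moreover from this have "sqrt (1 - ?h^2) > 0" by simp
    ultimately show ?thesis
      using Rpos hpos
      unfolding norm_Qproj[OF unitZ Rpos nq hpos] bcoef_def powr_three_halves[OF \<open>1 - ?h^2 > 0\<close>]
      by (simp add: power_divide power_mult_distrib field_simps power3_eq_cube power2_eq_square)
  qed
  ultimately show ?thesis by simp
qed

lemma Qproj_nonzero:
  fixes Z q :: "'a::real_inner"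
  assumes "norm Z = 1" "R > 0" "norm q = R" "hgt R Z q > 0" "q \<noteq> R *\<^sub>R Z"
  shows "Qproj R Z q \<noteq> 0"
proof -
  have "1 - hgt R Z q ^ 2 > 0"
    using hgt_less_one[OF assms(1-3,5)] assms(4) by (simp add: power_less_one_iff)
  then have "norm (Qproj R Z q) > 0"
    unfolding norm_Qproj[OF assms(1-4)] using assms(2,4) by simp
  then show ?thesis by simp
qed

lemma energy_eq_kepler_energy:
  fixes Z q v :: "'a::real_inner"
  assumes unitZ: "norm Z = 1" and Rpos: "R > 0" and nq: "norm q = R" and hpos: "hgt R Z q > 0"
    and ne: "q \<noteq> R *\<^sub>R Z" and qv: "q \<bullet> v = 0"
  defines "Q \<equiv> Qproj R Z q" and "W \<equiv> Qproj_velocity R Z q v"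
  shows "energy R Z q v = kepler_energy Q W + angular_momentum_sq Q W / (2 * R^2)"
proof -
  define h where "h = hgt R Z q"
  have Zq: "Z \<bullet> q = R * h" "q \<bullet> Z = R * h" using Rpos by (simp_all add: h_def hgt_def inner_commute)
  have ZZ: "Z \<bullet> Z = 1" and qq: "q \<bullet> q = R^2" using unitZ nq by (simp_all flip: power2_norm_eq_inner)
  have h: "h > 0" "h \<noteq> 0" using hpos by (simp_all add: h_def)
  have QQ: "Q \<bullet> Q = R^2 / h^2 - R^2"
    unfolding Q_def Qproj_def h_def[symmetric] using h Zq ZZ qq
    by (simp add: inner_diff_right inner_diff_left field_simps power2_eq_square)
  have WW: "W \<bullet> W = h^2 * (v \<bullet> v) + (Z \<bullet> v)^2"
    unfolding W_def Qproj_velocity_def h_def[symmetric] using Rpos qv qq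
    by (simp add: inner_diff_right inner_diff_left inner_commute field_simps power2_eq_square)
  have QW: "Q \<bullet> W = - R * (Z \<bullet> v) / h"
    unfolding W_def Q_def Qproj_velocity_def Qproj_def h_def[symmetric] using Rpos h qv qq Zq ZZ
    by (simp add: inner_diff_right inner_diff_left field_simps power2_eq_square inner_commute)
  have "Upot R Z q = - 1 / norm Q"
    using Rpos h ne hgt_less_one[OF unitZ Rpos nq ne]
    by (simp add: Upot_def Q_def norm_Qproj[OF unitZ Rpos nq hpos] h_def[symmetric] power_less_one_iff)
  moreover have "1/2 * (W \<bullet> W) + angular_momentum_sq Q W / (2 * R^2) = 1/2 * (norm v)^2"
    unfolding angular_momentum_sq_def QQ WW QW power2_norm_eq_inner using Rpos h
    by (simp add: field_simps power2_eq_square)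
  ultimately show ?thesis by (simp add: energy_def kepler_energy_def)
qed

lemma spherical_kepler_projection:
  fixes Z :: "'a::real_inner" and q v :: "real \<Rightarrow> 'a"
  assumes unitZ: "norm Z = 1" and Rpos: "R > 0" and t01: "t0 < t1"
    and onB: "\<And>t. t \<in> {t0<..<t1} \<Longrightarrow> norm (q t) = R \<and> hgt R Z (q t) > 0 \<and> q t \<noteq> R *\<^sub>R Z"
    and vel: "\<And>t. t \<in> {t0<..<t1} \<Longrightarrow> (q has_vector_derivative v t) (at t)"
    and eqn: "\<And>t. t \<in> {t0<..<t1} \<Longrightarrow>
                (v has_vector_derivative (bcoef R Z (q t) *\<^sub>R ZB R Z (q t) + lam t *\<^sub>R q t)) (at t)"
  shows "kepler_arc (\<lambda>t. Qproj R Z (q t)) (\<lambda>t. Qproj_velocity R Z (q t) (v t))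
           (\<lambda>t. 1 / hgt R Z (q t) ^ 2) t0 t1"
proof
  fix t assume t: "t \<in> {t0<..<t1}"
  note onB_t = onB[OF t, THEN conjunct1] onB[OF t, THEN conjunct2, THEN conjunct1]
    onB[OF t, THEN conjunct2, THEN conjunct2]
  show "((\<lambda>t. Qproj R Z (q t)) has_vector_derivative
      (1 / hgt R Z (q t) ^ 2) *\<^sub>R Qproj_velocity R Z (q t) (v t)) (at t)"
    by (rule Qproj_has_vector_derivative[where q = q and v = v, OF onB_t(2) vel[OF t]])
  show "((\<lambda>t. Qproj_velocity R Z (q t) (v t)) has_vector_derivative
      (- ((1 / hgt R Z (q t) ^ 2) / norm (Qproj R Z (q t)) ^ 3)) *\<^sub>R Qproj R Z (q t)) (at t)"
    by (rule Qproj_velocity_has_vector_derivative[where q = q and v = v,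
          OF unitZ Rpos onB_t vel[OF t] eqn[OF t]])
  show "1 / hgt R Z (q t) ^ 2 > 0" using onB_t(2) by simp
  show "Qproj R Z (q t) \<noteq> 0" by (rule Qproj_nonzero[OF unitZ Rpos onB_t])
qed (rule t01)

theorem mainTheorem1:
  fixes Z :: "'a::euclidean_space" and R t0 t1 a e :: real
    and q v :: "real \<Rightarrow> 'a" and lam :: "real \<Rightarrow> real" and S :: "'a set"
  assumes dim: "DIM('a) = 3" and unitZ: "norm Z = 1" and Rpos: "R > 0" and t01: "t0 < t1"
    and onB: "\<forall>t\<in>{t0<..<t1}. norm (q t) = R \<and> hgt R Z (q t) > 0 \<and> q t \<noteq> R *\<^sub>R Z"
    and vel: "\<forall>t\<in>{t0<..<t1}. (q has_vector_derivative v t) (at t)"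
    and eqn: "\<forall>t\<in>{t0<..<t1}. (v has_vector_derivative
                 (bcoef R Z (q t) *\<^sub>R ZB R Z (q t) + lam t *\<^sub>R q t)) (at t)"
    and ell: "is_ellipse Z a e S"
    and orbit: "(\<lambda>t. Qproj R Z (q t)) ` {t0<..<t1} \<subseteq> S"
  shows "(\<forall>\<tau>. (\<forall>t\<in>{t0<..<t1}. (\<tau> has_real_derivative 1 / (hgt R Z (q t))^2) (at t)) \<longrightarrow>
            (\<exists>P'. \<forall>s\<in>\<tau> ` {t0<..<t1}.
               ((\<lambda>s. Qproj R Z (q (inv_into {t0<..<t1} \<tau> s))) has_vector_derivative P' s) (at s) \<and>
               (P' has_vector_derivative
                  (- (1 / (norm (Qproj R Z (q (inv_into {t0<..<t1} \<tau> s))))^3)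
                     *\<^sub>R Qproj R Z (q (inv_into {t0<..<t1} \<tau> s)))) (at s)))
         \<and> (\<forall>t\<in>{t0<..<t1}. energy R Z (q t) (v t) = - 1 / (2 * a) + a * (1 - e^2) / (2 * R^2))"
proof -
  let ?Q = "\<lambda>t. Qproj R Z (q t)" and ?W = "\<lambda>t. Qproj_velocity R Z (q t) (v t)"
  interpret kepler_arc ?Q ?W "\<lambda>t. 1 / hgt R Z (q t) ^ 2" t0 t1
    using spherical_kepler_projection[OF unitZ Rpos t01] onB vel eqn by blast
  interpret kepler_arc_on_ellipse ?Q ?W "\<lambda>t. 1 / hgt R Z (q t) ^ 2" t0 t1 Z a e S
    by unfold_locales (use dim unitZ ell orbit in auto)
  show ?thesis
  proof (intro conjI allI impI ballI)
    fix \<tau> assume "\<forall>t\<in>{t0<..<t1}. (\<tau> has_real_derivative 1 / hgt R Z (q t) ^ 2) (at t)"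
    with reparametrized_kepler[of \<tau>] show "\<exists>P'. \<forall>s\<in>\<tau> ` {t0<..<t1}.
        ((\<lambda>s. ?Q (inv_into {t0<..<t1} \<tau> s)) has_vector_derivative P' s) (at s) \<and>
        (P' has_vector_derivative (- (1 / norm (?Q (inv_into {t0<..<t1} \<tau> s)) ^ 3))
           *\<^sub>R ?Q (inv_into {t0<..<t1} \<tau> s)) (at s)"
      by (intro exI[of _ "\<lambda>s. ?W (inv_into {t0<..<t1} \<tau> s)"]) simp
  next
    fix t assume t: "t \<in> {t0<..<t1}"
    have "q t \<bullet> v t = 0" using inner_velocity_zero_on_sphere onB vel t by blast
    with energy_eq_kepler_energy[OF unitZ Rpos] onB t kepler_energy_eq[OF t] kepler_parameters(1)[OF t]
    show "energy R Z (q t) (v t) = - 1 / (2 * a) + a * (1 - e^2) / (2 * R^2)" by simp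
  qed
qed

end
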